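(* Let $G=(V,E)$ be a graph, $\mathcal{F}$ a monotone feature, and $f,g:E\to\mathbb{R}$ two filtering functions with $\sup_{e\in E}|f(e)-g(e)|\le h$ for some real $h>0$. Let $X\subseteq V\cup E$ have $\mathcal{F}$-interval $[u_1,v_1)$ in $(G,f)$ with $u_1+2h<v_1<+\infty$. Then $X$ has a non-empty $\mathcal{F}$-interval $[u_2,v_2)$ in $(G,g)$, and $|u_1-u_2|\le h$, $|v_1-v_2|\le h$.
   Context: Graphs are finite simple undirected graphs. For a filtering function $f:E\to\mathbb{R}$ and $u\in\mathbb{R}$, $G_{f,u}=(V_{f,u},E_{f,u})$ is the subgraph induced by the edge set $f^{-1}((-\infty,u])$ (vertices: endpoints of these edges); similarly $G_{g,u}$. Only subgraphs induced by edge sets are considered. A feature $\mathcal{F}$ assigns to every graph $H=(V_H,E_H)$ a function $2^{V_H\cup E_H}\to\{true,false\}$. It is monotone if (i) for any graphs $G'=(V',E')\subset G''$ and any $X\subseteq V'\cup E'$, $\mathcal{F}(X)=true$ in $G''$ implies $\mathcal{F}(X)=true$ in $G'$; and (ii) in any graph, for $Y\subset X$, $\mathcal{F}(X)=true$ implies $\mathcal{F}(Y)=true$. For monotone $\mathcal{F}$ and $X\subseteq V\cup E$ such that $\mathcal{F}(X)=true$ in $G_{f,u}$ for some $u$, the $\mathcal{F}$-interval of $X$ in $(G,f)$ is $[u_1,v_1)$, where $u_1$ is the lowest $u$ with $X\subseteq V_{f,u}\cup E_{f,u}$ and $v_1$ is the lowest $v\ge u_1$ with $\mathcal{F}(X)=false$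 in $G_{f,v}$, or $+\infty$ if there is none; it is the widest interval on which $\mathcal{F}(X)=true$ in $G_{f,w}$. The $\mathcal{F}$-interval in $(G,g)$ is defined analogously. *)

theory Defs
  imports "HOL-Library.Extended_Real"
begin

text \<open>Elements of V \<union> E are represented in the sum type:
  Inl v for a vertex v, Inr e for an edge e.\<close>

type_synonym 'a graph = "'a set \<times> 'a set set"
type_synonym 'a elem = "'a + 'a set"

definition is_graph :: "'a graph \<Rightarrow> bool" where
  "is_graph G \<longleftrightarrow> finite (fst G) \<and>
     (\<forall>e\<in>snd G. e \<subseteq> fst G \<and> card e = 2)"

definition elems :: "'a graph \<Rightarrow> 'a elem set" where
  "elems G = Inl ` fst G \<union> Inr ` snd G"

definition subgraph :: "'a graph \<Rightarrow> 'a graph \<Rightarrow> bool" where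
  "subgraph G' G'' \<longleftrightarrow> fst G' \<subseteq> fst G'' \<and> snd G' \<subseteq> snd G''"

definition edge_induced :: "'a set set \<Rightarrow> 'a graph" where
  "edge_induced F = (\<Union>F, F)"

definition sublevel :: "'a graph \<Rightarrow> ('a set \<Rightarrow> real) \<Rightarrow> real \<Rightarrow> 'a graph" where
  "sublevel G f u = edge_induced {e \<in> snd G. f e \<le> u}"

type_synonym 'a feature = "'a graph \<Rightarrow> 'a elem set \<Rightarrow> bool"

definition monotone_feature :: "'a feature \<Rightarrow> bool" where
  "monotone_feature \<F> \<longleftrightarrow>
     (\<forall>G' G'' X. is_graph G' \<and> is_graph G'' \<and> subgraph G' G'' \<and> G' \<noteq> G'' \<and>
        X \<subseteq> elems G' \<and> \<F> G'' X \<longrightarrow> \<F> G' X) \<and>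
     (\<forall>H X Y. is_graph H \<and> X \<subseteq> elems H \<and> Y \<subset> X \<and> \<F> H X \<longrightarrow> \<F> H Y)"

definition F_interval ::
  "'a feature \<Rightarrow> 'a graph \<Rightarrow> ('a set \<Rightarrow> real) \<Rightarrow> 'a elem set \<Rightarrow> real \<Rightarrow> ereal \<Rightarrow> bool" where
  "F_interval \<F> G f X u v \<longleftrightarrow>
     (\<exists>w. X \<subseteq> elems (sublevel G f w) \<and> \<F> (sublevel G f w) X) \<and>
     X \<subseteq> elems (sublevel G f u) \<and> (\<forall>w. X \<subseteq> elems (sublevel G f w) \<longrightarrow> u \<le> w) \<and>
     ((v = \<infinity> \<and> (\<forall>w\<ge>u. \<F> (sublevel G f w) X)) \<or>
      (\<exists>v'. v = ereal v' \<and> v' \<ge> u \<and> \<not> \<F> (sublevel G f v') X \<and>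
        (\<forall>w\<ge>u. \<not> \<F> (sublevel G f w) X \<longrightarrow> v' \<le> w)))"

end

theory Submission
  imports Defs
begin

text \<open>Sublevel graphs change only when the level crosses a value of the filtering function, so
  any property of sublevel graphs that is closed under adding edges has a least level at which it
  starts to hold; perturbing the filter by at most h moves that level by at most h. Both ends of
  an \<F>-interval are such least levels: u is the least level at which X is present, and v the
  least level at which X is present but \<F>(X) fails, the latter property being closed under adding
  edges because \<F> is monotone.\<close>

lemma is_graph_finite_edges: "is_graph G \<Longrightarrow> finite (snd G)"
  unfolding is_graph_def by (meson Pow_iff finite_Pow_iff finite_subset subsetI)

lemma is_graph_edge_induced:
  assumes "is_graph G" "A \<subseteq> snd G"
  shows "is_graph (edge_induced A)"
proof -
  have "\<Union>A \<subseteq> fst G" using assms unfolding is_graph_def by blast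
  then have "finite (\<Union>A)" using assms(1) unfolding is_graph_def by (meson finite_subset)
  then show ?thesis using assms unfolding is_graph_def edge_induced_def by auto
qed

lemma elems_edge_induced_mono: "A \<subseteq> B \<Longrightarrow> elems (edge_induced A) \<subseteq> elems (edge_induced B)"
  unfolding elems_def edge_induced_def by auto

definition edge_upclosed :: "'a graph \<Rightarrow> ('a graph \<Rightarrow> bool) \<Rightarrow> bool" where
  "edge_upclosed G P \<longleftrightarrow>
     (\<forall>A B. A \<subseteq> B \<and> B \<subseteq> snd G \<and> P (edge_induced A) \<longrightarrow> P (edge_induced B))"

lemma edge_upclosedD:
  "edge_upclosed G P \<Longrightarrow> A \<subseteq> B \<Longrightarrow> B \<subseteq> snd G \<Longrightarrow> P (edge_induced A) \<Longrightarrow> P (edge_induced B)"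
  unfolding edge_upclosed_def by blast

lemma edge_upclosed_present: "edge_upclosed G (\<lambda>H. X \<subseteq> elems H)"
  unfolding edge_upclosed_def using elems_edge_induced_mono by blast

lemma edge_upclosed_present_not_feature:
  assumes "is_graph G" "monotone_feature \<F>"
  shows "edge_upclosed G (\<lambda>H. X \<subseteq> elems H \<and> \<not> \<F> H X)"
  unfolding edge_upclosed_def
proof (intro allI impI conjI notI)
  fix A B
  assume AB: "A \<subseteq> B \<and> B \<subseteq> snd G \<and> X \<subseteq> elems (edge_induced A) \<and> \<not> \<F> (edge_induced A) X"
  then show "X \<subseteq> elems (edge_induced B)" using elems_edge_induced_mono by blast
  assume F_B: "\<F> (edge_induced B) X"
  \<comment> \<open>Monotonicity of \<F> is only postulated for proper subgraphs.\<close>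
  then have "A \<noteq> B" using AB by blast
  then have "edge_induced A \<noteq> edge_induced B" unfolding edge_induced_def by simp
  moreover have "subgraph (edge_induced A) (edge_induced B)"
    using AB unfolding subgraph_def edge_induced_def by auto
  moreover have "is_graph (edge_induced A)" "is_graph (edge_induced B)"
    using AB assms(1) is_graph_edge_induced by (metis order_trans)+
  ultimately have "\<F> (edge_induced A) X"
    using AB F_B assms(2) unfolding monotone_feature_def by blast
  then show False using AB by blast
qed

lemma edge_upclosed_sublevel_shift:
  fixes f g :: "'a set \<Rightarrow> real"
  assumes "edge_upclosed G P" "\<forall>e\<in>snd G. \<bar>f e - g e\<bar> \<le> h" "P (sublevel G f w)"
  shows "P (sublevel G g (w + h))"
proof -
  have "{e \<in> snd G. f e \<le> w} \<subseteq> {e \<in> snd G. g e \<le> w + h}"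
    using assms(2) by (auto simp: abs_le_iff)
  from edge_upclosedD[OF assms(1) this _ assms(3)[unfolded sublevel_def]] show ?thesis
    unfolding sublevel_def by auto
qed

lemma edge_upclosed_sublevel_mono:
  fixes f :: "'a set \<Rightarrow> real"
  assumes "edge_upclosed G P" "w \<le> w'" "P (sublevel G f w)"
  shows "P (sublevel G f w')"
  using edge_upclosed_sublevel_shift[OF assms(1) _ assms(3), of f "w' - w"] assms(2) by simp

definition least_level :: "'a graph \<Rightarrow> ('a set \<Rightarrow> real) \<Rightarrow> ('a graph \<Rightarrow> bool) \<Rightarrow> real \<Rightarrow> bool"
  where "least_level G f P m \<longleftrightarrow> P (sublevel G f m) \<and> (\<forall>w. P (sublevel G f w) \<longrightarrow> m \<le> w)"

lemma sublevel_at_filter_value: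
  fixes f :: "'a set \<Rightarrow> real"
  assumes "finite (snd G)" "{e \<in> snd G. f e \<le> w} \<noteq> {}"
  obtains w' where "w' \<in> f ` snd G" "w' \<le> w" "sublevel G f w' = sublevel G f w"
proof
  let ?E = "{e \<in> snd G. f e \<le> w}"
  have "finite ?E" using assms(1) by simp
  then have "Max (f ` ?E) \<in> f ` ?E" and le_Max: "\<forall>e\<in>?E. f e \<le> Max (f ` ?E)"
    using assms(2) by auto
  then show "Max (f ` ?E) \<in> f ` snd G" "Max (f ` ?E) \<le> w" by auto
  then have "{e \<in> snd G. f e \<le> Max (f ` ?E)} = ?E" using le_Max by force
  then show "sublevel G f (Max (f ` ?E)) = sublevel G f w" unfolding sublevel_def by simp
qed

lemma least_level_exists:
  fixes f :: "'a set \<Rightarrow> real"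
  assumes "finite (snd G)" "\<not> P (edge_induced {})" "P (sublevel G f w0)"
  shows "\<exists>m. least_level G f P m"
proof -
  let ?A = "{w \<in> f ` snd G. P (sublevel G f w)}"
  have below_A: "\<exists>w'\<in>?A. w' \<le> w" if "P (sublevel G f w)" for w
  proof -
    have "{e \<in> snd G. f e \<le> w} \<noteq> {}"
      using that assms(2) unfolding sublevel_def by force
    with assms(1) obtain w' where "w' \<in> f ` snd G" "w' \<le> w" "sublevel G f w' = sublevel G f w"
      by (rule sublevel_at_filter_value)
    then show ?thesis using that by (intro bexI[of _ w']) auto
  qed
  have "finite ?A" using assms(1) by simp
  then have Min_le: "\<forall>w\<in>?A. Min ?A \<le> w" by simp
  have "?A \<noteq> {}" using below_A[OF assms(3)] by blast
  with \<open>finite ?A\<close> have "Min ?A \<in> ?A" by (rule Min_in)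
  moreover have "Min ?A \<le> w" if "P (sublevel G f w)" for w
    using below_A[OF that] Min_le by fastforce
  ultimately have "least_level G f P (Min ?A)" unfolding least_level_def by blast
  then show ?thesis ..
qed

lemma least_level_not_empty:
  assumes "edge_upclosed G P" "least_level G f P m"
  shows "\<not> P (edge_induced {})"
proof
  assume "P (edge_induced {})"
  from edge_upclosedD[OF assms(1) empty_subsetI _ this] have "P (sublevel G f (m - 1))"
    unfolding sublevel_def by auto
  then show False using assms(2) unfolding least_level_def by fastforce
qed

lemma least_level_shift:
  fixes f g :: "'a set \<Rightarrow> real"
  assumes "finite (snd G)" "edge_upclosed G P" "\<forall>e\<in>snd G. \<bar>f e - g e\<bar> \<le> h"
    and "least_level G f P u"
  obtains u' where "least_level G g P u'" "\<bar>u - u'\<bar> \<le> h"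
proof -
  have "P (sublevel G g (u + h))"
    using assms edge_upclosed_sublevel_shift unfolding least_level_def by blast
  then obtain u' where u': "least_level G g P u'"
    using least_level_exists[where P = P and f = g, OF assms(1) least_level_not_empty[OF assms(2,4)]] by blast
  have "\<forall>e\<in>snd G. \<bar>g e - f e\<bar> \<le> h" using assms(3) by (simp add: abs_minus_commute)
  then have "P (sublevel G f (u' + h))"
    using u' assms(2) edge_upclosed_sublevel_shift unfolding least_level_def by blast
  then have "u \<le> u' + h" and "u' \<le> u + h"
    using assms(4) u' \<open>P (sublevel G g (u + h))\<close> unfolding least_level_def by auto
  with u' show ?thesis using that by (simp add: abs_le_iff)
qed

lemma F_interval_least_levels:
  assumes "F_interval \<F> G f X u (ereal v)"
  shows "least_level G f (\<lambda>H. X \<subseteq> elems H) u"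
    and "least_level G f (\<lambda>H. X \<subseteq> elems H \<and> \<not> \<F> H X) v"
proof -
  show present: "least_level G f (\<lambda>H. X \<subseteq> elems H) u"
    using assms unfolding F_interval_def least_level_def by blast
  have "u \<le> v" and "\<not> \<F> (sublevel G f v) X"
    and "\<forall>w\<ge>u. \<not> \<F> (sublevel G f w) X \<longrightarrow> v \<le> w"
    using assms unfolding F_interval_def by auto
  moreover have "X \<subseteq> elems (sublevel G f v)"
    using present \<open>u \<le> v\<close> edge_upclosed_sublevel_mono[OF edge_upclosed_present]
    unfolding least_level_def by blast
  ultimately show "least_level G f (\<lambda>H. X \<subseteq> elems H \<and> \<not> \<F> H X) v"
    using present unfolding least_level_def by blast
qed

lemma F_interval_of_least_levels:
  assumes present: "least_level G f (\<lambda>H. X \<subseteq> elems H) u"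
    and dead: "least_level G f (\<lambda>H. X \<subseteq> elems H \<and> \<not> \<F> H X) v"
    and "u < v"
  shows "F_interval \<F> G f X u (ereal v)"
proof -
  have "\<F> (sublevel G f u) X" using present dead \<open>u < v\<close> unfolding least_level_def by force
  moreover have "X \<subseteq> elems (sublevel G f w)" if "u \<le> w" for w
    using present that edge_upclosed_sublevel_mono[OF edge_upclosed_present]
    unfolding least_level_def by blast
  ultimately show ?thesis
    using assms unfolding F_interval_def least_level_def by force
qed

theorem lemma3:
  fixes G :: "'a graph" and \<F> :: "'a feature" and f g :: "'a set \<Rightarrow> real"
    and h u1 v1 :: real and X :: "'a elem set"
  assumes "is_graph G"
    and "monotone_feature \<F>"
    and "h > 0"
    and "\<forall>e\<in>snd G. \<bar>f e - g e\<bar> \<le> h"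
    and "X \<subseteq> elems G"
    and "F_interval \<F> G f X u1 (ereal v1)"
    and "u1 + 2 * h < v1"
  shows "\<exists>u2 v2. F_interval \<F> G g X u2 (ereal v2) \<and> u2 < v2 \<and>
           \<bar>u1 - u2\<bar> \<le> h \<and> \<bar>v1 - v2\<bar> \<le> h"
proof -
  have fin: "finite (snd G)" using assms(1) by (rule is_graph_finite_edges)
  obtain u2 where u2: "least_level G g (\<lambda>H. X \<subseteq> elems H) u2" "\<bar>u1 - u2\<bar> \<le> h"
    using least_level_shift[OF fin edge_upclosed_present assms(4)]
      F_interval_least_levels(1)[OF assms(6)] by blast
  obtain v2 where v2: "least_level G g (\<lambda>H. X \<subseteq> elems H \<and> \<not> \<F> H X) v2" "\<bar>v1 - v2\<bar> \<le> h"
    using least_level_shift[OF fin edge_upclosed_present_not_feature[OF assms(1,2)] assms(4)]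
      F_interval_least_levels(2)[OF assms(6)] by blast
  have "u2 < v2" using u2(2) v2(2) assms(7) by linarith
  then show ?thesis using u2 v2 F_interval_of_least_levels by blast
qed

end
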